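(* Let $\mathcal{A}$ be a commutative $\sigma$-finite W*-algebra or a commutative AW*-algebra, and let $\mathcal{E}$ be a Hilbert C*-module over $\mathcal{A}$ of rank $d$. Let $n\geq \max(d,2)$ and let $\{\tau_j\}_{j=1}^n$ be a collection in $\mathcal{E}$ with $\langle\tau_j,\tau_j\rangle=1$ for all $j$. Then \[ 1\geq \|I_{\mathrm{MRMS}} (\{\tau_j\}_{j=1}^n)\|\geq I_{\mathrm{MRMS}} (\{\tau_j\}_{j=1}^n)\geq \left(\frac{n-d}{d(n-1)}\right)^{1/2}. \]
   Context: A W*-algebra is $\sigma$-finite if it contains at most countably many mutually orthogonal (nonzero) projections. A C*-algebra is an AW*-algebra if every set of orthogonal projections has a supremum and every maximal commutative self-adjoint subalgebra is generated by its projections. Such algebras are unital, with identity $1$. The $\mathcal{A}$-valued inner product on $\mathcal{E}$ is linear in the first variable and conjugate-linear in the second. $\mathcal{E}$ has rank $d$ if it has an orthonormal basis $\{\omega_j\}_{j=1}^d$, i.e. $\langle\omega_j,\omega_k\rangle=\delta_{jk}1$ and $x=\sum_{j=1}^d\langle x,\omega_j\rangle\omega_j$ for all $x$. The modular root-mean-square cross relation is the positive element \[ I_{\mathrm{MRMS}} (\{\tau_j\}_{j=1}^n)= \left(\frac{1}{n(n-1)}\sum _{1\leq j,k \leq n,\, j\neq k}\langle \tau_j, \tau_k\rangle \langle \tau_k, \tau_j\rangle \right)^{1/2}\in\mathcal{A} \] (positive square root). Inequalities between elements of $\mathcal{A}$ are in the order on self-adjoint elements, a real number $c$ being identified with $c\cdot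 1$; $\|\cdot\|$ is the C*-norm. *)

theory Defs
  imports "HOL-Analysis.Analysis"
begin

text \<open>
  A unital commutative complex C*-algebra is encoded on a type
  'a :: {real_normed_algebra_1, comm_ring_1, banach} (Banach algebra with unit of norm 1,
  commutative multiplication) together with
  emb : complex => 'a   (the scalars, c |-> c*1; complex scalar multiplication is emb c * a)
  st  : 'a => 'a        (the involution).
\<close>

definition cstar_algebra ::
  "(complex \<Rightarrow> 'a::{real_normed_algebra_1,comm_ring_1,banach}) \<Rightarrow> ('a \<Rightarrow> 'a) \<Rightarrow> bool" where
  "cstar_algebra emb st \<longleftrightarrow>
     (\<forall>c d. emb (c + d) = emb c + emb d) \<and>
     (\<forall>c d. emb (c * d) = emb c * emb d) \<and>
     emb 1 = 1 \<and>
     (\<forall>r a. scaleR r a = emb (complex_of_real r) * a) \<and>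
     (\<forall>c a. norm (emb c * a) = cmod c * norm a) \<and>
     (\<forall>a b. st (a + b) = st a + st b) \<and>
     (\<forall>a b. st (a * b) = st b * st a) \<and>
     (\<forall>c. st (emb c) = emb (cnj c)) \<and>
     (\<forall>a. st (st a) = a) \<and>
     (\<forall>a. norm (st a * a) = (norm a)\<^sup>2)"

definition invertible_el :: "'a::ring_1 \<Rightarrow> bool" where
  "invertible_el x \<longleftrightarrow> (\<exists>y. x * y = 1 \<and> y * x = 1)"

definition positive_el :: "(complex \<Rightarrow> 'a::ring_1) \<Rightarrow> ('a \<Rightarrow> 'a) \<Rightarrow> 'a \<Rightarrow> bool" where
  "positive_el emb st a \<longleftrightarrow> st a = a \<and>
     (\<forall>z. \<not> invertible_el (a - emb z) \<longrightarrow> Im z = 0 \<and> Re z \<ge> 0)"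

definition cle :: "(complex \<Rightarrow> 'a::ring_1) \<Rightarrow> ('a \<Rightarrow> 'a) \<Rightarrow> 'a \<Rightarrow> 'a \<Rightarrow> bool" where
  "cle emb st a b \<longleftrightarrow> positive_el emb st (b - a)"

definition psqrt :: "(complex \<Rightarrow> 'a::ring_1) \<Rightarrow> ('a \<Rightarrow> 'a) \<Rightarrow> 'a \<Rightarrow> 'a" where
  "psqrt emb st s = (THE r. positive_el emb st r \<and> r * r = s)"

definition is_proj :: "('a::ring_1 \<Rightarrow> 'a) \<Rightarrow> 'a \<Rightarrow> bool" where
  "is_proj st p \<longleftrightarrow> st p = p \<and> p * p = p"

definition proj_le :: "'a::ring_1 \<Rightarrow> 'a \<Rightarrow> bool" where
  "proj_le p q \<longleftrightarrow> p * q = p"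

definition orth_proj_family :: "('a::ring_1 \<Rightarrow> 'a) \<Rightarrow> 'a set \<Rightarrow> bool" where
  "orth_proj_family st P \<longleftrightarrow> (\<forall>p\<in>P. is_proj st p) \<and> (\<forall>p\<in>P. \<forall>q\<in>P. p \<noteq> q \<longrightarrow> p * q = 0)"

definition star_subalg :: "(complex \<Rightarrow> 'a::ring_1) \<Rightarrow> ('a \<Rightarrow> 'a) \<Rightarrow> 'a set \<Rightarrow> bool" where
  "star_subalg emb st B \<longleftrightarrow> 0 \<in> B \<and>
     (\<forall>a\<in>B. \<forall>b\<in>B. a + b \<in> B \<and> a * b \<in> B) \<and>
     (\<forall>c. \<forall>a\<in>B. emb c * a \<in> B) \<and> (\<forall>a\<in>B. st a \<in> B)"

definition comm_sa_subalg :: "(complex \<Rightarrow> 'a::ring_1) \<Rightarrow> ('a \<Rightarrow> 'a) \<Rightarrow> 'a set \<Rightarrow> bool" where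
  "comm_sa_subalg emb st B \<longleftrightarrow> star_subalg emb st B \<and> (\<forall>a\<in>B. \<forall>b\<in>B. a * b = b * a)"

definition max_comm_sa_subalg :: "(complex \<Rightarrow> 'a::ring_1) \<Rightarrow> ('a \<Rightarrow> 'a) \<Rightarrow> 'a set \<Rightarrow> bool" where
  "max_comm_sa_subalg emb st B \<longleftrightarrow> comm_sa_subalg emb st B \<and>
     (\<forall>C. comm_sa_subalg emb st C \<and> B \<subseteq> C \<longrightarrow> C = B)"

definition cstar_gen :: "(complex \<Rightarrow> 'a::{ring_1,topological_space}) \<Rightarrow> ('a \<Rightarrow> 'a) \<Rightarrow> 'a set \<Rightarrow> 'a set" where
  "cstar_gen emb st S = \<Inter>{C. S \<subseteq> C \<and> star_subalg emb st C \<and> closed C}"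

definition AWstar :: "(complex \<Rightarrow> 'a::{ring_1,topological_space}) \<Rightarrow> ('a \<Rightarrow> 'a) \<Rightarrow> bool" where
  "AWstar emb st \<longleftrightarrow>
     (\<forall>P. orth_proj_family st P \<longrightarrow>
        (\<exists>s. is_proj st s \<and> (\<forall>p\<in>P. proj_le p s) \<and>
             (\<forall>t. is_proj st t \<and> (\<forall>p\<in>P. proj_le p t) \<longrightarrow> proj_le s t))) \<and>
     (\<forall>B. max_comm_sa_subalg emb st B \<longrightarrow> B = cstar_gen emb st {p\<in>B. is_proj st p})"

text \<open>W*-algebras: C*-algebras that are (isometrically) dual Banach spaces. The predual is
  realised as a norm-closed subspace V of the Banach dual, such that the canonical map
  a |-> (f |-> f a) is an isometric isomorphism of the algebra onto the dual of V.\<close>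

definition bdd_cfunctional :: "(complex \<Rightarrow> 'a::real_normed_algebra_1) \<Rightarrow> ('a \<Rightarrow> complex) \<Rightarrow> bool" where
  "bdd_cfunctional emb f \<longleftrightarrow> (\<forall>a b. f (a + b) = f a + f b) \<and> (\<forall>c a. f (emb c * a) = c * f a) \<and>
     (\<exists>K. \<forall>a. cmod (f a) \<le> K * norm a)"

definition fnorm :: "('a::real_normed_vector \<Rightarrow> complex) \<Rightarrow> real" where
  "fnorm f = (SUP a\<in>{a. norm a \<le> 1}. cmod (f a))"

definition Wstar :: "(complex \<Rightarrow> 'a::real_normed_algebra_1) \<Rightarrow> bool" where
  "Wstar emb \<longleftrightarrow> (\<exists>V.
     V \<subseteq> {f. bdd_cfunctional emb f} \<and> (\<lambda>_. 0) \<in> V \<and>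
     (\<forall>f\<in>V. \<forall>g\<in>V. (\<lambda>a. f a + g a) \<in> V) \<and> (\<forall>c. \<forall>f\<in>V. (\<lambda>a. c * f a) \<in> V) \<and>
     (\<forall>F f. (\<forall>i. F i \<in> V) \<and> bdd_cfunctional emb f \<and>
            (\<lambda>i. fnorm (\<lambda>a. F i a - f a)) \<longlonglongrightarrow> 0 \<longrightarrow> f \<in> V) \<and>
     (\<forall>g. (\<forall>f\<in>V. \<forall>h\<in>V. g (\<lambda>a. f a + h a) = g f + g h) \<and>
          (\<forall>c. \<forall>f\<in>V. g (\<lambda>a. c * f a) = c * g f) \<and>
          (\<exists>K. \<forall>f\<in>V. cmod (g f) \<le> K * fnorm f)
          \<longrightarrow> (\<exists>a. \<forall>f\<in>V. g f = f a)) \<and>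
     (\<forall>a. norm a = (SUP f\<in>{f\<in>V. fnorm f \<le> 1}. cmod (f a))))"

definition sigma_finite_alg :: "('a::ring_1 \<Rightarrow> 'a) \<Rightarrow> bool" where
  "sigma_finite_alg st \<longleftrightarrow> (\<forall>P. orth_proj_family st P \<and> 0 \<notin> P \<longrightarrow> countable P)"

definition sigma_finite_Wstar :: "(complex \<Rightarrow> 'a::real_normed_algebra_1) \<Rightarrow> ('a \<Rightarrow> 'a) \<Rightarrow> bool" where
  "sigma_finite_Wstar emb st \<longleftrightarrow> Wstar emb \<and> sigma_finite_alg st"

definition hilbert_module ::
  "(complex \<Rightarrow> 'a::{real_normed_algebra_1,comm_ring_1,banach}) \<Rightarrow> ('a \<Rightarrow> 'a) \<Rightarrow>
   ('a \<Rightarrow> 'm::ab_group_add \<Rightarrow> 'm) \<Rightarrow> ('m \<Rightarrow> 'm \<Rightarrow> 'a) \<Rightarrow> bool" where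
  "hilbert_module emb st act ip \<longleftrightarrow>
     (\<forall>a b x. act (a + b) x = act a x + act b x) \<and>
     (\<forall>a x y. act a (x + y) = act a x + act a y) \<and>
     (\<forall>a b x. act (a * b) x = act a (act b x)) \<and>
     (\<forall>x. act 1 x = x) \<and>
     (\<forall>x y z. ip (x + y) z = ip x z + ip y z) \<and>
     (\<forall>a x y. ip (act a x) y = a * ip x y) \<and>
     (\<forall>x y. ip y x = st (ip x y)) \<and>
     (\<forall>x. positive_el emb st (ip x x)) \<and>
     (\<forall>x. ip x x = 0 \<longrightarrow> x = 0) \<and>
     (\<forall>X::nat \<Rightarrow> 'm.
        (\<forall>e>0. \<exists>N. \<forall>m\<ge>N. \<forall>k\<ge>N. sqrt (norm (ip (X m - X k) (X m - X k))) < e) \<longrightarrow>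
        (\<exists>L. \<forall>e>0. \<exists>N. \<forall>k\<ge>N. sqrt (norm (ip (X k - L) (X k - L))) < e))"

definition has_rank ::
  "('a::comm_ring_1 \<Rightarrow> 'm::ab_group_add \<Rightarrow> 'm) \<Rightarrow> ('m \<Rightarrow> 'm \<Rightarrow> 'a) \<Rightarrow> nat \<Rightarrow> bool" where
  "has_rank act ip d \<longleftrightarrow> (\<exists>\<omega>::nat \<Rightarrow> 'm.
     (\<forall>j<d. \<forall>k<d. ip (\<omega> j) (\<omega> k) = (if j = k then 1 else 0)) \<and>
     (\<forall>x. x = (\<Sum>j<d. act (ip x (\<omega> j)) (\<omega> j))))"

definition I_MRMS ::
  "(complex \<Rightarrow> 'a::comm_ring_1) \<Rightarrow> ('a \<Rightarrow> 'a) \<Rightarrow> ('m \<Rightarrow> 'm \<Rightarrow> 'a) \<Rightarrow> nat \<Rightarrow> (nat \<Rightarrow> 'm) \<Rightarrow> 'a" where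
  "I_MRMS emb st ip n \<tau> = psqrt emb st
     (emb (complex_of_real (1 / (real n * (real n - 1)))) *
      (\<Sum>j<n. \<Sum>k\<in>{..<n} - {j}. ip (\<tau> j) (\<tau> k) * ip (\<tau> k) (\<tau> j)))"

end

theory Submission
  imports Defs "HOL-Computational_Algebra.Formal_Power_Series"
begin

text \<open>
  The argument works in every unital commutative C*-algebra.

  Positivity, defined spectrally, is equivalent to the norm condition: x is self-adjoint and
  \<open>\<parallel>R - x\<parallel> \<le> R\<close> for some \<open>R \<ge> 0\<close>. In this form the positive elements visibly form a convex cone,
  and the binomial series of \<open>sqrt (1 - t)\<close> gives every positive element a positive square root;
  hence the cone is closed under products and positive square roots are unique.

  Let s be the mean of the cross terms \<open>\<langle>\<tau>\<^sub>j,\<tau>\<^sub>k\<rangle>\<langle>\<tau>\<^sub>k,\<tau>\<^sub>j\<rangle> = |\<langle>\<tau>\<^sub>j,\<tau>\<^sub>k\<rangle>|\<^sup>2\<close>, so that the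
  cross relation is \<open>sqrt s\<close>. Cauchy-Schwarz for unit vectors gives \<open>0 \<le> s \<le> 1\<close>, hence
  \<open>\<parallel>sqrt s\<parallel> \<le> 1\<close>. For the lower bound expand in an orthonormal basis \<open>\<omega>\<close>: the frame potential
  \<open>\<Sum>\<^sub>j\<^sub>,\<^sub>k |\<langle>\<tau>\<^sub>j,\<tau>\<^sub>k\<rangle>|\<^sup>2\<close> equals \<open>\<Sum>\<^sub>i\<^sub>,\<^sub>l |M\<^sub>i\<^sub>l|\<^sup>2\<close> for the self-adjoint d\<times>d matrix
  \<open>M\<^sub>i\<^sub>l = \<Sum>\<^sub>k \<langle>\<omega>\<^sub>i,\<tau>\<^sub>k\<rangle>\<langle>\<tau>\<^sub>k,\<omega>\<^sub>l\<rangle>\<close> of trace n, and is therefore at least \<open>\<Sum>\<^sub>i M\<^sub>i\<^sub>i\<^sup>2 \<ge> n\<^sup>2/d\<close>.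
  This is \<open>s \<ge> c = (n - d)/(d(n - 1))\<close>, and \<open>sqrt s - sqrt c = (s - c)(sqrt s + sqrt c)\<^sup>-\<^sup>1\<close> is positive.
\<close>

section \<open>The binomial series of sqrt (1 - t)\<close>

definition sqrt_coeff :: "nat \<Rightarrow> real" where
  "sqrt_coeff k = (-1)^k * ((1/2::real) gchoose k)"

lemma sqrt_coeff_0 [simp]: "sqrt_coeff 0 = 1"
  by (simp add: sqrt_coeff_def)

lemma sqrt_coeff_nonpos: assumes "k \<ge> 1" shows "sqrt_coeff k \<le> 0"
proof -
  obtain j where k: "k = Suc j" using assms by (cases k) auto
  have "sqrt_coeff k = pochhammer (-1/2) k / fact k"
    unfolding sqrt_coeff_def gbinomial_pochhammer by (simp add: power_mult_distrib[symmetric])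
  also have "pochhammer (-1/2::real) k = (-1/2) * pochhammer (1/2) j"
    unfolding k pochhammer_rec by simp
  finally show ?thesis using pochhammer_pos[of "1/2::real" j]
    by (simp add: divide_nonpos_pos)
qed

lemma sum_sqrt_coeff_nonneg: "(\<Sum>k\<le>m. sqrt_coeff k) \<ge> 0"
proof -
  have "(\<Sum>k\<le>m. sqrt_coeff k) = (\<Sum>k\<le>m. ((1/2::real) gchoose k) * (-1)^k)"
    by (simp add: sqrt_coeff_def mult.commute)
  also have "\<dots> = (-1)^m * ((1/2 - 1) gchoose m)" by (rule gbinomial_sum_lower_neg)
  also have "\<dots> = pochhammer (1/2) m / fact m"
    by (simp add: gbinomial_pochhammer power_mult_distrib[symmetric])
  finally show ?thesis by (simp add: pochhammer_nonneg)
qed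

lemma sum_abs_sqrt_coeff_Suc_le: "(\<Sum>k<m. \<bar>sqrt_coeff (Suc k)\<bar>) \<le> 1"
proof -
  have "(\<Sum>k<m. \<bar>sqrt_coeff (Suc k)\<bar>) = - (\<Sum>k<m. sqrt_coeff (Suc k))"
    using sqrt_coeff_nonpos by (simp add: sum_negf[symmetric])
  also have "(\<Sum>k<m. sqrt_coeff (Suc k)) = (\<Sum>k\<le>m. sqrt_coeff k) - 1"
    using sum.atMost_shift[of sqrt_coeff m] by (simp add: lessThan_Suc_atMost)
  finally show ?thesis using sum_sqrt_coeff_nonneg[of m] by linarith
qed

lemma summable_abs_sqrt_coeff_Suc: "summable (\<lambda>k. \<bar>sqrt_coeff (Suc k)\<bar>)"
  using bounded_imp_summable[of "\<lambda>k. \<bar>sqrt_coeff (Suc k)\<bar>" 1] sum_abs_sqrt_coeff_Suc_le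
  by (metis abs_ge_zero lessThan_Suc_atMost)

lemma summable_abs_sqrt_coeff: "summable (\<lambda>k. \<bar>sqrt_coeff k\<bar>)"
  using summable_abs_sqrt_coeff_Suc summable_Suc_iff by blast

lemma suminf_abs_sqrt_coeff_Suc_le: "(\<Sum>k. \<bar>sqrt_coeff (Suc k)\<bar>) \<le> 1"
  using suminf_le_const[OF summable_abs_sqrt_coeff_Suc] sum_abs_sqrt_coeff_Suc_le by blast

text \<open>The Cauchy square of the series is \<open>1 - x\<close>, by Vandermonde's identity for \<open>1/2 + 1/2\<close>.\<close>
lemma sqrt_coeff_convolution:
  "(\<Sum>i\<le>k. sqrt_coeff i * sqrt_coeff (k - i)) = (if k = 0 then 1 else if k = 1 then -1 else 0)"
proof -
  have "(\<Sum>i\<le>k. sqrt_coeff i * sqrt_coeff (k - i))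
      = (-1)^k * (\<Sum>i\<in>{0..k}. ((1/2::real) gchoose i) * ((1/2) gchoose (k - i)))"
    unfolding sum_distrib_left atMost_atLeast0
    by (rule sum.cong) (auto simp: sqrt_coeff_def power_add[symmetric])
  also have "\<dots> = (-1)^k * ((1::real) gchoose k)" by (simp add: gbinomial_Vandermonde)
  also have "(1::real) gchoose k = of_nat (1 choose k)"
    by (metis binomial_gbinomial of_nat_1)
  finally show ?thesis by (cases k) (auto simp: binomial_eq_0)
qed

definition sqrt_one_minus :: "'a::{real_normed_algebra_1,banach} \<Rightarrow> 'a" where
  "sqrt_one_minus t = (\<Sum>k. sqrt_coeff k *\<^sub>R t^k)"

lemma norm_sqrt_coeff_scaleR_power_le:
  fixes t :: "'a::real_normed_algebra_1"
  assumes "norm t \<le> 1" shows "norm (sqrt_coeff k *\<^sub>R t^k) \<le> \<bar>sqrt_coeff k\<bar>"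
proof -
  have "norm (t^k) \<le> 1"
    using norm_power_ineq[of t k] power_le_one[OF norm_ge_zero assms, of k] by linarith
  thus ?thesis by (simp add: mult_left_le)
qed

lemma summable_norm_sqrt_one_minus:
  fixes t :: "'a::real_normed_algebra_1"
  assumes "norm t \<le> 1" shows "summable (\<lambda>k. norm (sqrt_coeff k *\<^sub>R t^k))"
  by (rule summable_comparison_test'[OF summable_abs_sqrt_coeff])
     (use norm_sqrt_coeff_scaleR_power_le[OF assms] in auto)

lemma sqrt_one_minus_square:
  fixes t :: "'a::{real_normed_algebra_1,banach}"
  assumes "norm t \<le> 1" shows "sqrt_one_minus t * sqrt_one_minus t = 1 - t"
proof -
  let ?f = "\<lambda>k. sqrt_coeff k *\<^sub>R t^k"
  have "sqrt_one_minus t * sqrt_one_minus t = (\<Sum>k. \<Sum>i\<le>k. ?f i * ?f (k - i))"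
    unfolding sqrt_one_minus_def
    by (rule Cauchy_product[OF summable_norm_sqrt_one_minus[OF assms] summable_norm_sqrt_one_minus[OF assms]])
  also have "(\<lambda>k. \<Sum>i\<le>k. ?f i * ?f (k - i)) = (\<lambda>k. if k = 0 then 1 else if k = 1 then - t else 0)"
  proof
    fix k
    have "(\<Sum>i\<le>k. ?f i * ?f (k - i)) = (\<Sum>i\<le>k. sqrt_coeff i * sqrt_coeff (k - i)) *\<^sub>R t^k"
      by (auto simp: scaleR_sum_left power_add[symmetric] intro: sum.cong)
    thus "(\<Sum>i\<le>k. ?f i * ?f (k - i)) = (if k = 0 then 1 else if k = 1 then - t else 0)"
      by (simp add: sqrt_coeff_convolution)
  qed
  also have "(\<Sum>k. if k = 0 then 1 else if k = 1 then - t else 0) = 1 - t"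
    using suminf_finite[of "{0, 1}" "\<lambda>k. if k = 0 then 1 else if k = 1 then - t else 0"] by simp
  finally show ?thesis .
qed

lemma norm_one_minus_sqrt_one_minus_le:
  fixes t :: "'a::{real_normed_algebra_1,banach}"
  assumes "norm t \<le> 1" shows "norm (1 - sqrt_one_minus t) \<le> 1"
proof -
  let ?f = "\<lambda>k. sqrt_coeff k *\<^sub>R t^k"
  have "sqrt_one_minus t - 1 = (\<Sum>k. ?f (Suc k))"
    using suminf_split_head[OF summable_norm_cancel[OF summable_norm_sqrt_one_minus[OF assms]]]
    by (simp add: sqrt_one_minus_def)
  hence "norm (1 - sqrt_one_minus t) = norm (\<Sum>k. ?f (Suc k))"
    by (metis norm_minus_commute)
  also have "\<dots> \<le> (\<Sum>k. \<bar>sqrt_coeff (Suc k)\<bar>)"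
    by (rule norm_suminf_le[OF norm_sqrt_coeff_scaleR_power_le[OF assms] summable_abs_sqrt_coeff_Suc])
  also have "\<dots> \<le> 1" by (rule suminf_abs_sqrt_coeff_Suc_le)
  finally show ?thesis .
qed

section \<open>Positivity in a commutative C*-algebra\<close>

lemma invertible_el_iff: "invertible_el (x::'a::comm_ring_1) \<longleftrightarrow> (\<exists>y. x * y = 1)"
  unfolding invertible_el_def by (auto simp: mult.commute)

lemma invertible_el_mult:
  "invertible_el (x::'a::comm_ring_1) \<Longrightarrow> invertible_el y \<Longrightarrow> invertible_el (x * y)"
  unfolding invertible_el_iff by (metis mult.assoc mult.left_commute mult_1_right)

lemma invertible_el_minus_iff: "invertible_el (- (x::'a::comm_ring_1)) \<longleftrightarrow> invertible_el x"
proof -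
  have "- x * y = x * (- y)" for y by simp
  thus ?thesis unfolding invertible_el_iff by (metis minus_minus)
qed

lemma invertible_el_one_minus:
  fixes x :: "'a::{real_normed_algebra_1,comm_ring_1,banach}"
  assumes "norm x < 1" shows "invertible_el (1 - x)"
proof -
  have "summable (\<lambda>k. norm (x^k))"
    by (rule summable_comparison_test'[where g="\<lambda>k. norm x ^ k"])
       (auto simp: assms summable_geometric norm_power_ineq)
  hence s: "summable (\<lambda>k. x^k)" by (rule summable_norm_cancel)
  have "(\<Sum>k. x^Suc k) = (\<Sum>k. x^k) - 1" using suminf_split_head[OF s] by simp
  moreover have "(\<Sum>k. x^Suc k) = x * (\<Sum>k. x^k)"
    using suminf_mult[OF s, of x] by simp
  ultimately have "(1 - x) * (\<Sum>k. x^k) = 1" by (simp add: algebra_simps)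
  thus ?thesis unfolding invertible_el_iff by blast
qed

locale comm_cstar =
  fixes emb :: "complex \<Rightarrow> 'a::{real_normed_algebra_1,comm_ring_1,banach}"
    and st :: "'a \<Rightarrow> 'a"
  assumes cstar_algebra: "cstar_algebra emb st"
begin

lemma emb_add: "emb (c + d) = emb c + emb d"
  using cstar_algebra unfolding cstar_algebra_def by blast
lemma emb_mult: "emb (c * d) = emb c * emb d"
  using cstar_algebra unfolding cstar_algebra_def by blast
lemma emb_1 [simp]: "emb 1 = 1"
  using cstar_algebra unfolding cstar_algebra_def by blast
lemma scaleR_eq_emb_mult: "scaleR r a = emb (complex_of_real r) * a"
  using cstar_algebra unfolding cstar_algebra_def by blast
lemma norm_emb_mult: "norm (emb c * a) = cmod c * norm a"
  using cstar_algebra unfolding cstar_algebra_def by blast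
lemma st_add: "st (a + b) = st a + st b"
  using cstar_algebra unfolding cstar_algebra_def by blast
lemma st_mult: "st (a * b) = st a * st b"
  using cstar_algebra unfolding cstar_algebra_def by (simp add: mult.commute)
lemma st_emb: "st (emb c) = emb (cnj c)"
  using cstar_algebra unfolding cstar_algebra_def by blast
lemma st_st [simp]: "st (st a) = a"
  using cstar_algebra unfolding cstar_algebra_def by blast
lemma norm_st_mult_self: "norm (st a * a) = (norm a)\<^sup>2"
  using cstar_algebra unfolding cstar_algebra_def by blast

lemma emb_of_real: "emb (complex_of_real r) = of_real r"
  using scaleR_eq_emb_mult[of r 1] by (simp add: of_real_def)

lemma emb_0 [simp]: "emb 0 = 0"
  using emb_add[of 0 0] by simp
lemma emb_minus: "emb (- c) = - emb c"
  using emb_add[of c "- c"] by (simp add: add_eq_0_iff2)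
lemma emb_diff: "emb (c - d) = emb c - emb d"
  using emb_add[of c "- d"] by (simp add: emb_minus)

lemma st_0 [simp]: "st 0 = 0"
  using st_add[of 0 0] by simp
lemma st_minus: "st (- a) = - st a"
  using st_add[of a "- a"] by (simp add: add_eq_0_iff2)
lemma st_diff: "st (a - b) = st a - st b"
  using st_add[of a "- b"] by (simp add: st_minus)
lemma st_1 [simp]: "st 1 = 1"
  using st_emb[of 1] by simp
lemma st_of_real [simp]: "st (of_real r) = of_real r"
  using st_emb[of "complex_of_real r"] by (simp add: emb_of_real)
lemma st_scaleR: "st (scaleR r a) = scaleR r (st a)"
  by (simp add: scaleR_conv_of_real st_mult)
lemma st_sum: "st (sum f A) = (\<Sum>i\<in>A. st (f i))"
  by (induction A rule: infinite_finite_induct) (auto simp: st_add)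
lemma st_power: "st (a ^ k) = st a ^ k"
  by (induction k) (auto simp: st_mult)

lemma norm_mult_self_selfadjoint: "st h = h \<Longrightarrow> norm (h * h) = (norm h)\<^sup>2"
  using norm_st_mult_self[of h] by simp

lemma norm_st [simp]: "norm (st a) = norm a"
proof -
  have le: "norm b \<le> norm (st b)" for b
  proof (cases "b = 0")
    case False
    have "(norm b)\<^sup>2 \<le> norm (st b) * norm b"
      using norm_st_mult_self[of b] norm_mult_ineq[of "st b" b] by simp
    thus ?thesis using False by (simp add: power2_eq_square)
  qed simp
  show ?thesis using le[of a] le[of "st a"] by simp
qed

lemma bounded_linear_st: "bounded_linear st"
  by (rule bounded_linear_intro[where K=1]) (auto simp: st_add st_scaleR)

definition J :: 'a where "J = emb \<i>"

lemma J_mult_J: "J * J = -1"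
  unfolding J_def emb_mult[symmetric] by (simp add: emb_minus)
lemma st_J: "st J = - J"
  unfolding J_def st_emb by (simp add: emb_minus)

lemma st_mult_self_add_J:
  assumes "st a = a" "st b = b"
  shows "st (a + J * b) * (a + J * b) = a * a + b * b"
proof -
  have "st (a + J * b) = a - J * b" by (simp add: st_add st_mult st_J assms)
  moreover have "(a - J * b) * (a + J * b) = a * a - (J * J) * (b * b)" by (simp add: algebra_simps)
  ultimately show ?thesis by (simp add: J_mult_J)
qed

lemma invertible_el_diff_emb:
  assumes "norm x < cmod w" shows "invertible_el (x - emb w)"
proof -
  have w: "w \<noteq> 0" using assms by auto
  let ?y = "emb (1/w) * x"
  have "norm ?y < 1" using assms w by (simp add: norm_emb_mult norm_divide divide_simps)
  hence i1: "invertible_el (1 - ?y)" by (rule invertible_el_one_minus)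
  have e: "emb w * emb (1/w) = 1" using w by (simp add: emb_mult[symmetric])
  have i2: "invertible_el (- emb w)"
    unfolding invertible_el_iff by (rule exI[of _ "- emb (1/w)"]) (simp add: e)
  have "x - emb w = (- emb w) * (1 - ?y)" using e by (simp add: algebra_simps)
  thus ?thesis using invertible_el_mult[OF i2 i1] by simp
qed

text \<open>
  Shifting h by \<open>J t\<close> and z by \<open>\<i> t\<close> leaves \<open>h - emb z\<close> unchanged; if it were not invertible,
  \<open>|z + \<i> t| \<le> \<parallel>h + J t\<parallel>\<close> for all real t, i.e. \<open>|z|\<^sup>2 + 2 t Im z \<le> \<parallel>h\<parallel>\<^sup>2\<close>, absurd for large t.
\<close>
lemma invertible_el_selfadjoint_diff_emb:
  assumes h: "st h = h" and z: "Im z \<noteq> 0" shows "invertible_el (h - emb z)"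
proof (rule ccontr)
  assume ni: "\<not> invertible_el (h - emb z)"
  have key: "(Re z)\<^sup>2 + (Im z + t)\<^sup>2 \<le> (norm h)\<^sup>2 + t\<^sup>2" for t :: real
  proof -
    have "h - emb z = (h + J * of_real t) - emb (z + \<i> * complex_of_real t)"
      by (simp add: emb_add emb_mult J_def emb_of_real)
    hence "cmod (z + \<i> * complex_of_real t) \<le> norm (h + J * of_real t)"
      using invertible_el_diff_emb ni by (metis not_le)
    moreover have "(cmod (z + \<i> * complex_of_real t))\<^sup>2 = (Re z)\<^sup>2 + (Im z + t)\<^sup>2"
      by (simp add: cmod_power2)
    moreover have "(norm (h + J * of_real t))\<^sup>2 = norm (h * h + of_real t * of_real t)"
      using norm_st_mult_self[of "h + J * of_real t"] st_mult_self_add_J[OF h, of "of_real t"]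
      by simp
    moreover have "norm (h * h + of_real t * of_real t :: 'a) \<le> (norm h)\<^sup>2 + t\<^sup>2"
      using norm_triangle_ineq[of "h * h" "of_real t * of_real t"] norm_mult_ineq[of h h]
      by (simp add: power2_eq_square abs_mult_self_eq flip: of_real_mult)
    ultimately show ?thesis
      by (smt (verit, ccfv_SIG) norm_ge_zero power_mono)
  qed
  define t where "t = ((norm h)\<^sup>2 + 1) / (2 * Im z)"
  have "2 * Im z * t = (norm h)\<^sup>2 + 1" using z by (simp add: t_def)
  moreover have "(Re z)\<^sup>2 + (Im z + t)\<^sup>2 = (Re z)\<^sup>2 + (Im z)\<^sup>2 + 2 * Im z * t + t\<^sup>2"
    by (simp add: power2_eq_square algebra_simps)
  ultimately show False using key[of t]
    by (smt (verit) zero_le_power2)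
qed

lemma norm_le_one_if_square_sum_one:
  assumes a: "st a = a" and b: "st b = b" and ab: "a * a + b * b = 1"
  shows "norm a \<le> 1"
proof -
  define u where "u = a + J * b"
  have "(norm u)\<^sup>2 = 1"
    using norm_st_mult_self[of u] st_mult_self_add_J[OF a b] ab by (simp add: u_def)
  hence nu: "norm u = 1" using norm_ge_zero[of u] by (auto simp: power2_eq_1_iff)
  have "st u + u = 2 *\<^sub>R a"
    unfolding u_def by (simp add: st_add st_mult st_J a b algebra_simps scaleR_2)
  hence "2 * norm a = norm (st u + u)" by simp
  also have "\<dots> \<le> 2"
    using norm_triangle_ineq[of "st u" u] nu by simp
  finally show ?thesis by simp
qed

lemma st_sqrt_one_minus:
  assumes "st t = t" "norm t \<le> 1" shows "st (sqrt_one_minus t) = sqrt_one_minus t"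
proof -
  have "st (sqrt_one_minus t) = (\<Sum>k. st (sqrt_coeff k *\<^sub>R t^k))"
    unfolding sqrt_one_minus_def
    by (rule bounded_linear.suminf[OF bounded_linear_st
          summable_norm_cancel[OF summable_norm_sqrt_one_minus[OF assms(2)]]])
  thus ?thesis by (simp add: sqrt_one_minus_def st_scaleR st_power assms(1))
qed

text \<open>Equivalent to positive_el (positive_el_iff_npos), but evidently stable under sums and
  positive multiples.\<close>
definition npos :: "'a \<Rightarrow> bool" where
  "npos x \<longleftrightarrow> st x = x \<and> (\<exists>R\<ge>0. norm (of_real R - x) \<le> R)"

lemma npos_selfadjoint: "npos x \<Longrightarrow> st x = x"
  unfolding npos_def by blast

lemma npos_add: assumes "npos x" "npos y" shows "npos (x + y)"
proof -
  obtain R1 R2 where r: "R1 \<ge> 0" "R2 \<ge> 0" "norm (of_real R1 - x) \<le> R1" "norm (of_real R2 - y) \<le> R2"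
    using assms unfolding npos_def by blast
  have "norm (of_real (R1 + R2) - (x + y)) = norm ((of_real R1 - x) + (of_real R2 - y))"
    by (simp add: algebra_simps)
  also have "\<dots> \<le> R1 + R2"
    using r norm_triangle_ineq[of "of_real R1 - x" "of_real R2 - y"] by linarith
  finally show ?thesis
    using assms r unfolding npos_def by (auto simp: st_add intro!: exI[of _ "R1 + R2"])
qed

lemma npos_scaleR: assumes "npos x" "c \<ge> 0" shows "npos (c *\<^sub>R x)"
proof -
  obtain R where r: "R \<ge> 0" "norm (of_real R - x) \<le> R" using assms unfolding npos_def by blast
  have "of_real (c * R) - c *\<^sub>R x = c *\<^sub>R (of_real R - x)"
    by (simp add: algebra_simps scaleR_conv_of_real)
  hence "norm (of_real (c * R) - c *\<^sub>R x) \<le> c * R" using r assms(2) by (simp add: mult_left_mono)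
  thus ?thesis using assms r unfolding npos_def by (auto simp: st_scaleR intro!: exI[of _ "c * R"])
qed

lemma npos_of_real_mult: "npos x \<Longrightarrow> c \<ge> 0 \<Longrightarrow> npos (of_real c * x)"
  using npos_scaleR by (simp add: scaleR_conv_of_real)

lemma npos_of_real: "r \<ge> 0 \<Longrightarrow> npos (of_real r)"
  unfolding npos_def by (auto intro!: exI[of _ r])

lemma npos_0: "npos 0"
  using npos_of_real[of 0] by simp

lemma npos_sum: "(\<And>i. i \<in> A \<Longrightarrow> npos (f i)) \<Longrightarrow> npos (sum f A)"
  by (induction A rule: infinite_finite_induct) (auto simp: npos_0 npos_add)

lemma npos_of_real_diff: assumes "st h = h" "norm h \<le> c" shows "npos (of_real c - h)"
proof -
  have "0 \<le> c" using assms(2) norm_ge_zero[of h] by linarith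
  thus ?thesis unfolding npos_def using assms by (auto simp: st_diff intro!: exI[of _ c])
qed

lemma positive_el_if_npos: assumes "npos x" shows "positive_el emb st x"
  unfolding positive_el_def
proof (intro conjI allI impI)
  show sx: "st x = x" using assms npos_def by blast
  fix z assume ni: "\<not> invertible_el (x - emb z)"
  show im: "Im z = 0" using invertible_el_selfadjoint_diff_emb[OF sx] ni by blast
  show "Re z \<ge> 0"
  proof (rule ccontr)
    assume neg: "\<not> Re z \<ge> 0"
    obtain R where r: "R \<ge> 0" "norm (of_real R - x) \<le> R" using assms unfolding npos_def by blast
    have "complex_of_real R - z = complex_of_real (R - Re z)"
      using im by (simp add: complex_eq_iff)
    hence "cmod (complex_of_real R - z) = R - Re z" using neg r(1) by (simp only: norm_of_real)
    hence "norm (of_real R - x) < cmod (complex_of_real R - z)" using neg r by simp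
    hence "invertible_el ((of_real R - x) - emb (complex_of_real R - z))"
      by (rule invertible_el_diff_emb)
    moreover have "(of_real R - x) - emb (complex_of_real R - z) = - (x - emb z)"
      by (simp add: emb_diff emb_of_real)
    ultimately show False using ni invertible_el_minus_iff by metis
  qed
qed

lemma invertible_el_npos_add_of_real: assumes "npos x" "r > 0" shows "invertible_el (x + of_real r)"
proof (rule ccontr)
  assume "\<not> invertible_el (x + of_real r)"
  hence "\<not> invertible_el (x - emb (complex_of_real (- r)))" by (simp add: emb_minus emb_of_real)
  hence "Re (complex_of_real (- r)) \<ge> 0"
    using positive_el_if_npos[OF assms(1)] unfolding positive_el_def by blast
  thus False using assms(2) by simp
qed

lemma npos_square: assumes h: "st h = h" shows "npos (h * h)"
proof (cases "h = 0")
  case True thus ?thesis by (simp add: npos_0)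
next
  case False
  define \<rho> where "\<rho> = norm h"
  have rp: "\<rho> > 0" using False by (simp add: \<rho>_def)
  define t where "t = (1 / \<rho>\<^sup>2) *\<^sub>R (h * h)"
  have st_t: "st t = t" unfolding t_def by (simp add: st_scaleR st_mult h)
  have nt: "norm t \<le> 1"
    unfolding t_def using norm_mult_self_selfadjoint[OF h] rp by (simp add: \<rho>_def)
  define g where "g = sqrt_one_minus t"
  have gg: "g * g = 1 - t" unfolding g_def by (rule sqrt_one_minus_square[OF nt])
  have "g * g + ((1/\<rho>) *\<^sub>R h) * ((1/\<rho>) *\<^sub>R h) = 1"
    using gg rp by (simp add: t_def power2_eq_square)
  hence "norm g \<le> 1"
    by (rule norm_le_one_if_square_sum_one[rotated 2])
       (simp_all add: g_def st_scaleR h st_sqrt_one_minus[OF st_t nt])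
  hence "norm (1 - t) \<le> 1" using gg norm_mult_ineq[of g g]
    by (metis mult_le_one norm_ge_zero order_trans)
  moreover have "of_real (\<rho>\<^sup>2) - h * h = \<rho>\<^sup>2 *\<^sub>R (1 - t)"
    using rp by (simp add: t_def scaleR_diff_right of_real_def)
  ultimately have "norm (of_real (\<rho>\<^sup>2) - h * h) \<le> \<rho>\<^sup>2" by (simp add: mult_left_le)
  thus ?thesis unfolding npos_def using h by (auto simp: st_mult intro!: exI[of _ "\<rho>\<^sup>2"])
qed

lemma npos_sqrt: assumes "npos x" shows "\<exists>y. npos y \<and> y * y = x"
proof -
  obtain R where r: "R \<ge> 0" "norm (of_real R - x) \<le> R" and sx: "st x = x"
    using assms unfolding npos_def by blast
  show ?thesis
  proof (cases "R = 0")
    case True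
    hence "x = 0" using r by simp
    thus ?thesis using npos_0 by (intro exI[of _ 0]) simp
  next
    case False
    hence Rp: "R > 0" using r by simp
    define t where "t = (1/R) *\<^sub>R (of_real R - x)"
    have st_t: "st t = t" unfolding t_def by (simp add: st_scaleR st_diff sx)
    have nt: "norm t \<le> 1" unfolding t_def using r Rp by (simp add: divide_le_eq)
    define y where "y = sqrt R *\<^sub>R sqrt_one_minus t"
    have "y * y = R *\<^sub>R (1 - t)"
      using Rp by (simp add: y_def sqrt_one_minus_square[OF nt])
    also have "\<dots> = x" using Rp by (simp add: t_def scaleR_diff_right of_real_def)
    finally have yy: "y * y = x" .
    have "of_real (sqrt R) - y = sqrt R *\<^sub>R (1 - sqrt_one_minus t)"
      by (simp add: y_def scaleR_diff_right of_real_def)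
    hence "norm (of_real (sqrt R) - y) \<le> sqrt R"
      using norm_one_minus_sqrt_one_minus_le[OF nt] r(1) by (simp add: mult_left_le)
    hence "npos y" unfolding npos_def using st_sqrt_one_minus[OF st_t nt] r(1)
      by (auto simp: y_def st_scaleR intro!: exI[of _ "sqrt R"])
    thus ?thesis using yy by blast
  qed
qed

lemma npos_mult: assumes "npos a" "npos b" shows "npos (a * b)"
proof -
  obtain \<alpha> \<beta> where "npos \<alpha>" "\<alpha> * \<alpha> = a" "npos \<beta>" "\<beta> * \<beta> = b"
    using npos_sqrt assms by metis
  hence "a * b = (\<alpha> * \<beta>) * (\<alpha> * \<beta>)" and "st (\<alpha> * \<beta>) = \<alpha> * \<beta>"
    by (auto simp: mult_ac st_mult npos_selfadjoint)
  thus ?thesis using npos_square by metis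
qed

lemma npos_inverse: assumes "npos b" "b * c = 1" shows "npos c"
proof -
  have "st c * b = 1" using assms st_mult[of c b] npos_selfadjoint[OF assms(1)]
    by (metis mult.commute st_1)
  hence "st c = c" by (metis assms(2) mult.assoc mult_1_left mult_1_right)
  moreover have "c = b * (c * c)" using assms(2) by (metis mult.assoc mult_1_left)
  ultimately show ?thesis using npos_mult[OF assms(1) npos_square] by metis
qed

lemma norm_le_if_npos_bound: assumes "npos a" "npos (of_real M - a)" "M > 0" shows "norm a \<le> M"
proof -
  obtain \<alpha> \<beta> where ab: "npos \<alpha>" "\<alpha> * \<alpha> = a" "npos \<beta>" "\<beta> * \<beta> = of_real M - a"
    using npos_sqrt assms by metis
  define s where "s = 1 / sqrt M"
  have "(s *\<^sub>R \<alpha>) * (s *\<^sub>R \<alpha>) + (s *\<^sub>R \<beta>) * (s *\<^sub>R \<beta>) = (s * s) *\<^sub>R (\<alpha> * \<alpha> + \<beta> * \<beta>)"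
    by (simp add: scaleR_add_right)
  also have "\<dots> = 1" using ab assms(3) by (simp add: s_def of_real_def)
  finally have "norm (s *\<^sub>R \<alpha>) \<le> 1"
    using norm_le_one_if_square_sum_one ab npos_selfadjoint st_scaleR by metis
  hence "norm \<alpha> \<le> sqrt M" using assms(3) by (simp add: s_def divide_le_eq)
  hence "norm \<alpha> * norm \<alpha> \<le> sqrt M * sqrt M" using assms(3) by (intro mult_mono) auto
  hence "norm \<alpha> * norm \<alpha> \<le> M" using assms(3) by simp
  moreover have "norm a \<le> norm \<alpha> * norm \<alpha>" using norm_mult_ineq[of \<alpha> \<alpha>] ab(2) by simp
  ultimately show ?thesis by linarith
qed

lemma npos_antisym: assumes "npos a" "npos (- a)" shows "a = 0"
proof -
  have "norm a \<le> 0 + e" if "e > 0" for e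
  proof -
    have "npos (of_real e - a)" using npos_add[OF npos_of_real assms(2), of e] that by simp
    thus ?thesis using norm_le_if_npos_bound[OF assms(1) _ that] by simp
  qed
  hence "norm a \<le> 0" by (rule field_le_epsilon)
  thus ?thesis by simp
qed

lemma npos_diff_of_real_if_invertible:
  assumes "npos b" "invertible_el b" shows "\<exists>\<eta>>0. npos (b - of_real \<eta>)"
proof -
  obtain c where bc: "b * c = 1" using assms(2) invertible_el_iff by blast
  have "npos c" by (rule npos_inverse[OF assms(1) bc])
  define M where "M = norm c"
  have Mp: "M > 0" using bc by (auto simp: M_def)
  have "npos (of_real M - c)"
    using npos_of_real_diff[OF npos_selfadjoint[OF \<open>npos c\<close>]] by (simp add: M_def)
  hence "npos ((1/M) *\<^sub>R (b * (of_real M - c)))"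
    using npos_mult[OF assms(1)] npos_scaleR Mp by simp
  moreover have "b * (of_real M - c) = M *\<^sub>R b - 1"
    using bc by (simp add: right_diff_distrib scaleR_conv_of_real mult.commute)
  hence "(1/M) *\<^sub>R (b * (of_real M - c)) = b - of_real (1/M)"
    using Mp by (simp add: scaleR_diff_right of_real_def)
  ultimately show ?thesis using Mp by (intro exI[of _ "1/M"]) simp
qed

text \<open>\<open>\<parallel>k\<parallel>\<close> or \<open>-\<parallel>k\<parallel>\<close> lies in the spectrum of a self-adjoint k: otherwise \<open>\<parallel>k\<parallel>\<^sup>2 - k\<^sup>2\<close> would be
  invertible and positive, hence \<open>k\<^sup>2 \<le> (\<parallel>k\<parallel>\<^sup>2 - \<eta>)\<close>, contradicting \<open>\<parallel>k\<^sup>2\<parallel> = \<parallel>k\<parallel>\<^sup>2\<close>.\<close>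
lemma not_invertible_el_norm_pm_selfadjoint:
  assumes k: "st k = k" "k \<noteq> 0"
  shows "\<not> invertible_el (of_real (norm k) - k) \<or> \<not> invertible_el (of_real (norm k) + k)"
proof (rule ccontr)
  define \<rho> where "\<rho> = norm k"
  assume "\<not> ?thesis"
  hence "invertible_el ((of_real \<rho> - k) * (of_real \<rho> + k))"
    using invertible_el_mult by (auto simp: \<rho>_def)
  moreover have "(of_real \<rho> - k) * (of_real \<rho> + k) = of_real (\<rho>\<^sup>2) - k * k"
    by (simp add: algebra_simps power2_eq_square)
  ultimately have ib: "invertible_el (of_real (\<rho>\<^sup>2) - k * k)" by simp
  have nk: "norm (k * k) = \<rho>\<^sup>2" using norm_mult_self_selfadjoint[OF k(1)] by (simp add: \<rho>_def)
  have "npos (of_real (\<rho>\<^sup>2) - k * k)"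
    by (rule npos_of_real_diff) (simp_all add: st_mult k(1) nk)
  then obtain \<eta> where e: "\<eta> > 0" "npos (of_real (\<rho>\<^sup>2) - k * k - of_real \<eta>)"
    using npos_diff_of_real_if_invertible ib by blast
  define \<eta>' where "\<eta>' = min \<eta> (\<rho>\<^sup>2 / 2)"
  have rp: "\<rho> > 0" using k by (simp add: \<rho>_def)
  have "npos ((of_real (\<rho>\<^sup>2) - k * k - of_real \<eta>) + of_real (\<eta> - \<eta>'))"
    by (rule npos_add[OF e(2) npos_of_real]) (simp add: \<eta>'_def)
  hence "npos (of_real (\<rho>\<^sup>2 - \<eta>') - k * k)" by (simp add: algebra_simps)
  moreover have "\<rho>\<^sup>2 - \<eta>' > 0" "\<eta>' > 0" using e(1) rp by (auto simp: \<eta>'_def min_def)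
  ultimately have "norm (k * k) \<le> \<rho>\<^sup>2 - \<eta>'"
    using norm_le_if_npos_bound npos_square[OF k(1)] by blast
  thus False using nk \<open>\<eta>' > 0\<close> by simp
qed

lemma npos_if_positive_el: assumes "positive_el emb st a" shows "npos a"
proof -
  have sa: "st a = a" and pos: "\<And>z. \<not> invertible_el (a - emb z) \<Longrightarrow> Re z \<ge> 0"
    using assms unfolding positive_el_def by auto
  define N where "N = norm a"
  define k where "k = of_real N - a"
  have a: "a = of_real N - k" by (simp add: k_def)
  have sk: "st k = k" by (simp add: k_def st_diff sa)
  have "norm k \<le> N"
  proof (rule ccontr)
    assume "\<not> norm k \<le> N"
    hence gt: "norm k > N" by simp
    hence k0: "k \<noteq> 0" using norm_ge_zero[of a] by (auto simp: N_def)
    from not_invertible_el_norm_pm_selfadjoint[OF sk k0] show False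
    proof
      assume "\<not> invertible_el (of_real (norm k) - k)"
      moreover have "of_real (norm k) - k = a - emb (complex_of_real (N - norm k))"
        by (simp add: a emb_diff emb_of_real)
      ultimately show False using pos gt by fastforce
    next
      assume ni: "\<not> invertible_el (of_real (norm k) + k)"
      have "norm a < cmod (complex_of_real (norm k + N))"
        using gt k0 by (simp only: norm_of_real, subst abs_of_nonneg) (simp_all add: N_def)
      hence "invertible_el (a - emb (complex_of_real (norm k + N)))"
        by (rule invertible_el_diff_emb)
      moreover have "a - emb (complex_of_real (norm k + N)) = - (of_real (norm k) + k)"
        by (simp add: a emb_add emb_of_real)
      ultimately show False using ni invertible_el_minus_iff by metis
    qed
  qed
  thus ?thesis unfolding npos_def k_def using sa by (auto simp: N_def intro!: exI[of _ N])
qed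

lemma positive_el_iff_npos: "positive_el emb st x \<longleftrightarrow> npos x"
  using positive_el_if_npos npos_if_positive_el by blast

text \<open>If \<open>r\<^sup>2 = y\<^sup>2\<close> then \<open>(r - y)\<^sup>2 r\<close> and \<open>(r - y)\<^sup>2 y\<close> are positive with sum \<open>(r - y)(r\<^sup>2 - y\<^sup>2) = 0\<close>,
  so both vanish; hence \<open>(r - y)\<^sup>3 = 0\<close>, and the C*-identity forces \<open>r = y\<close>.\<close>
lemma npos_square_eq_imp_eq: assumes "npos r" "npos y" "r * r = y * y" shows "r = y"
proof -
  define h where "h = r - y"
  have sh: "st h = h" using assms by (simp add: h_def st_diff npos_selfadjoint)
  have p1: "npos (h * h * r)" by (rule npos_mult[OF npos_square[OF sh] assms(1)])
  have p2: "npos (h * h * y)" by (rule npos_mult[OF npos_square[OF sh] assms(2)])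
  have "h * h * r + h * h * y = h * (r * r - y * y)" by (simp add: h_def algebra_simps)
  hence "h * h * y = - (h * h * r)" using assms(3) by (simp add: eq_neg_iff_add_eq_0 add.commute)
  hence "h * h * r = 0" "h * h * y = 0" using npos_antisym p1 p2 by auto
  moreover have "h * h * r - h * h * y = h * h * h" by (simp add: h_def right_diff_distrib)
  ultimately have "(h * h) * (h * h) = 0" by (simp add: mult.assoc)
  hence "norm (h * h) = 0" using norm_mult_self_selfadjoint[of "h * h"] sh by (simp add: st_mult)
  hence "norm h = 0" using norm_mult_self_selfadjoint[OF sh] by simp
  thus ?thesis by (simp add: h_def)
qed

lemma psqrt_square: assumes "npos y" shows "psqrt emb st (y * y) = y"
  unfolding psqrt_def positive_el_iff_npos
  using assms npos_square_eq_imp_eq by (intro the_equality) auto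

text \<open>Polarisation: \<open>4 x x\<^sup>* = (x + x\<^sup>*)\<^sup>2 + (J (x - x\<^sup>*))\<^sup>2\<close> with both squared elements self-adjoint.\<close>
lemma npos_mult_st: "npos (x * st x)"
proof -
  define h where "h = x + st x"
  define k where "k = J * (x - st x)"
  have sh: "st h = h" by (simp add: h_def st_add add.commute)
  have sk: "st k = k" by (simp add: k_def st_mult st_diff st_J algebra_simps)
  have "k * k = (J * J) * ((x - st x) * (x - st x))" by (simp add: k_def mult_ac)
  hence "h * h + k * k = (x + st x) * (x + st x) - (x - st x) * (x - st x)"
    by (simp add: h_def J_mult_J)
  also have "\<dots> = 4 *\<^sub>R (x * st x)" by (simp add: algebra_simps scaleR_conv_of_real)
  finally have "x * st x = (1/4) *\<^sub>R (h * h + k * k)" by simp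
  thus ?thesis by (simp add: npos_scaleR npos_add npos_square sh sk)
qed

lemma npos_diff_of_real_sqrt:
  assumes y: "npos y" and c: "c \<ge> 0" and yc: "npos (y * y - of_real c)"
  shows "npos (y - of_real (sqrt c))"
proof (cases "c = 0")
  case True thus ?thesis using y by simp
next
  case False
  define q where "q = sqrt c"
  have qp: "q > 0" using c False by (simp add: q_def)
  obtain w where w: "(y + of_real q) * w = 1"
    using invertible_el_npos_add_of_real[OF y qp] invertible_el_iff by blast
  have "npos w" by (rule npos_inverse[OF npos_add[OF y npos_of_real] w]) (use qp in simp)
  have "of_real q * of_real q = (of_real c :: 'a)" using c by (simp add: q_def flip: of_real_mult)
  hence "(y * y - of_real c) * w = (y - of_real q) * ((y + of_real q) * w)"
    by (simp add: algebra_simps)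
  also have "\<dots> = y - of_real q" using w by simp
  finally show ?thesis using npos_mult[OF yc \<open>npos w\<close>] by (simp add: q_def)
qed

lemma norm_le_one_if_npos_one_minus_square:
  assumes "npos y" "npos (1 - y * y)" shows "norm y \<le> 1"
proof -
  have "norm (y * y) \<le> 1"
    using norm_le_if_npos_bound[OF npos_mult[OF assms(1) assms(1)]] assms(2) by simp
  hence "(norm y)\<^sup>2 \<le> 1\<^sup>2" using norm_mult_self_selfadjoint[OF npos_selfadjoint[OF assms(1)]] by simp
  thus ?thesis by (rule power2_le_imp_le) simp
qed


lemma npos_st_mult: "npos (st x * x)"
  using npos_mult_st[of "st x"] by simp

lemma npos_sum_squares_diff:
  assumes d: "d > 0" and sa: "\<And>i. i < d \<Longrightarrow> st (m i) = m i" and tr: "(\<Sum>i<d. m i) = of_real t"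
  shows "npos ((\<Sum>i<d. m i * m i) - of_real (t\<^sup>2 / real d))"
proof -
  define \<mu> where "\<mu> = t / real d"
  have "(\<Sum>i<d. (m i - of_real \<mu>) * (m i - of_real \<mu>))
      = (\<Sum>i<d. m i * m i) - of_real (2 * \<mu>) * (\<Sum>i<d. m i) + of_real (real d * \<mu>\<^sup>2)"
    by (simp add: algebra_simps sum.distrib sum_subtractf sum_distrib_left power2_eq_square)
  also have "of_real (2 * \<mu>) * (\<Sum>i<d. m i) = of_real (2 * \<mu> * t)"
    by (simp add: tr)
  also have "2 * \<mu> * t = real d * \<mu>\<^sup>2 + t\<^sup>2 / real d"
    using d by (simp add: \<mu>_def field_simps power2_eq_square)
  finally have "(\<Sum>i<d. m i * m i) - of_real (t\<^sup>2 / real d) = (\<Sum>i<d. (m i - of_real \<mu>) * (m i - of_real \<mu>))"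
    by (simp add: algebra_simps)
  also have "npos \<dots>" by (intro npos_sum npos_square) (simp add: st_diff sa)
  finally show ?thesis .
qed

end

section \<open>Frames in a Hilbert module\<close>

lemma sum_swap_pairs:
  "(\<Sum>j\<in>A. \<Sum>k\<in>B. \<Sum>i\<in>C. \<Sum>l\<in>D. f j k i l) = (\<Sum>i\<in>C. \<Sum>l\<in>D. \<Sum>j\<in>A. \<Sum>k\<in>B. f j k i l)"
proof -
  have "(\<Sum>j\<in>A. \<Sum>k\<in>B. \<Sum>i\<in>C. \<Sum>l\<in>D. f j k i l) = (\<Sum>j\<in>A. \<Sum>i\<in>C. \<Sum>k\<in>B. \<Sum>l\<in>D. f j k i l)"
    by (intro sum.cong refl sum.swap)
  also have "\<dots> = (\<Sum>i\<in>C. \<Sum>j\<in>A. \<Sum>k\<in>B. \<Sum>l\<in>D. f j k i l)"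
    by (rule sum.swap)
  also have "\<dots> = (\<Sum>i\<in>C. \<Sum>j\<in>A. \<Sum>l\<in>D. \<Sum>k\<in>B. f j k i l)"
    by (intro sum.cong refl sum.swap)
  also have "\<dots> = (\<Sum>i\<in>C. \<Sum>l\<in>D. \<Sum>j\<in>A. \<Sum>k\<in>B. f j k i l)"
    by (intro sum.cong refl sum.swap)
  finally show ?thesis .
qed

locale comm_hilbert_module = comm_cstar emb st
  for emb :: "complex \<Rightarrow> 'a::{real_normed_algebra_1,comm_ring_1,banach}" and st +
  fixes act :: "'a \<Rightarrow> 'm::ab_group_add \<Rightarrow> 'm"
    and ip :: "'m \<Rightarrow> 'm \<Rightarrow> 'a"
  assumes hilbert_module: "hilbert_module emb st act ip"
begin

lemma ip_axioms:
  "(\<forall>x y z. ip (x + y) z = ip x z + ip y z) \<and> (\<forall>a x y. ip (act a x) y = a * ip x y) \<and>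
   (\<forall>x y. ip y x = st (ip x y)) \<and> (\<forall>x. positive_el emb st (ip x x))"
  using hilbert_module unfolding hilbert_module_def by (elim conjE) (intro conjI)

lemma ip_add_left: "ip (x + y) z = ip x z + ip y z"
  using ip_axioms by blast
lemma ip_act_left: "ip (act a x) y = a * ip x y"
  using ip_axioms by blast
lemma ip_swap: "ip y x = st (ip x y)"
  using ip_axioms by blast
lemma positive_el_ip_self: "positive_el emb st (ip x x)"
  using ip_axioms by blast

lemma ip_zero_left [simp]: "ip 0 z = 0"
  using ip_add_left[of 0 0 z] by simp
lemma ip_diff_left: "ip (x - y) z = ip x z - ip y z"
  using ip_add_left[of "x - y" y z] by (simp add: algebra_simps)
lemma ip_sum_left: "ip (sum f A) z = (\<Sum>i\<in>A. ip (f i) z)"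
  by (induction A rule: infinite_finite_induct) (auto simp: ip_add_left)

lemma npos_ip_mult_ip: "npos (ip x y * ip y x)"
  using npos_mult_st[of "ip x y"] by (simp add: ip_swap[of y x])

text \<open>Project x off y: for \<open>z = x - \<langle>x,y\<rangle> y\<close> one has \<open>\<langle>z,z\<rangle> = 1 - \<langle>x,y\<rangle>\<langle>y,x\<rangle>\<close>.\<close>
lemma cauchy_schwarz_unit:
  assumes "ip x x = 1" "ip y y = 1" shows "npos (1 - ip x y * ip y x)"
proof -
  define g where "g = ip x y"
  define z where "z = x - act g y"
  have zy: "ip z y = 0" by (simp add: z_def ip_diff_left ip_act_left assms g_def)
  have zx: "ip z x = 1 - g * st g" by (simp add: z_def ip_diff_left ip_act_left assms g_def ip_swap[of x y])
  have "ip (x - act g y) z = ip x z - ip (act g y) z" by (rule ip_diff_left)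
  hence "ip z z = ip x z - ip (act g y) z" by (simp only: z_def[symmetric])
  also have "\<dots> = st (ip z x) - g * st (ip z y)" by (simp only: ip_act_left ip_swap[of z x] ip_swap[of z y] st_st)
  also have "\<dots> = 1 - ip x y * ip y x" by (simp add: zx zy st_diff st_mult g_def ip_swap[of x y] mult.commute)
  finally show ?thesis using npos_if_positive_el[OF positive_el_ip_self[of z]] by simp
qed

lemma ip_expand_basis:
  assumes "\<forall>x. x = (\<Sum>i<d. act (ip x (\<omega> i)) (\<omega> i))"
  shows "ip x y = (\<Sum>i<d. ip x (\<omega> i) * ip (\<omega> i) y)"
proof -
  have "ip x y = ip (\<Sum>i<d. act (ip x (\<omega> i)) (\<omega> i)) y"
    using spec[OF assms, of x] by (rule arg_cong[where f="\<lambda>u. ip u y"])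
  thus ?thesis by (simp add: ip_sum_left ip_act_left)
qed

definition cross_sum :: "nat \<Rightarrow> (nat \<Rightarrow> 'm) \<Rightarrow> 'a" where
  "cross_sum n \<tau> = (\<Sum>j<n. \<Sum>k\<in>{..<n} - {j}. ip (\<tau> j) (\<tau> k) * ip (\<tau> k) (\<tau> j))"

definition cross_mean :: "nat \<Rightarrow> (nat \<Rightarrow> 'm) \<Rightarrow> 'a" where
  "cross_mean n \<tau> = of_real (1 / (real n * (real n - 1))) * cross_sum n \<tau>"

definition frame_potential :: "nat \<Rightarrow> (nat \<Rightarrow> 'm) \<Rightarrow> 'a" where
  "frame_potential n \<tau> = (\<Sum>j<n. \<Sum>k<n. ip (\<tau> j) (\<tau> k) * ip (\<tau> k) (\<tau> j))"

lemma I_MRMS_eq_psqrt_cross_mean: "I_MRMS emb st ip n \<tau> = psqrt emb st (cross_mean n \<tau>)"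
  unfolding I_MRMS_def cross_mean_def cross_sum_def emb_of_real ..

lemma npos_cross_sum: "npos (cross_sum n \<tau>)"
  unfolding cross_sum_def by (intro npos_sum npos_ip_mult_ip)

lemma npos_cross_mean: "npos (cross_mean n \<tau>)"
  unfolding cross_mean_def by (rule npos_of_real_mult[OF npos_cross_sum]) (cases n, simp_all)

lemma npos_cross_sum_upper:
  assumes unit: "\<forall>j<n. ip (\<tau> j) (\<tau> j) = 1"
  shows "npos (of_nat (n * (n - 1)) - cross_sum n \<tau>)"
proof -
  have "(\<Sum>j<n. \<Sum>k\<in>{..<n} - {j}. (1::'a)) = (\<Sum>j<n. of_nat (n - 1))"
    by (intro sum.cong refl) simp
  also have "\<dots> = of_nat (n * (n - 1))" by (simp only: sum_constant card_lessThan of_nat_mult)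
  finally have "of_nat (n * (n - 1)) - cross_sum n \<tau>
      = (\<Sum>j<n. \<Sum>k\<in>{..<n} - {j}. 1 - ip (\<tau> j) (\<tau> k) * ip (\<tau> k) (\<tau> j))"
    by (simp only: cross_sum_def sum_subtractf flip: \<open>_ = of_nat (n * (n - 1))\<close>)
  also have "npos \<dots>" using unit by (intro npos_sum cauchy_schwarz_unit) auto
  finally show ?thesis .
qed

lemma npos_one_minus_cross_mean:
  assumes "n \<ge> 2" and unit: "\<forall>j<n. ip (\<tau> j) (\<tau> j) = 1"
  shows "npos (1 - cross_mean n \<tau>)"
proof -
  define c where "c = 1 / (real n * (real n - 1))"
  have "c * real (n * (n - 1)) = 1" using assms(1) by (simp add: c_def of_nat_diff)
  hence "1 - cross_mean n \<tau> = of_real (c * real (n * (n - 1))) - of_real c * cross_sum n \<tau>"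
    by (simp add: cross_mean_def c_def)
  also have "\<dots> = of_real c * (of_nat (n * (n - 1)) - cross_sum n \<tau>)"
    by (simp only: of_real_mult of_real_of_nat_eq right_diff_distrib)
  also have "npos \<dots>"
    using npos_of_real_mult[OF npos_cross_sum_upper[OF unit]] assms(1) by (simp add: c_def)
  finally show ?thesis .
qed

lemma frame_potential_eq:
  assumes unit: "\<forall>j<n. ip (\<tau> j) (\<tau> j) = 1"
  shows "frame_potential n \<tau> = of_nat n + cross_sum n \<tau>"
proof -
  have "frame_potential n \<tau>
      = (\<Sum>j<n. ip (\<tau> j) (\<tau> j) * ip (\<tau> j) (\<tau> j) + (\<Sum>k\<in>{..<n} - {j}. ip (\<tau> j) (\<tau> k) * ip (\<tau> k) (\<tau> j)))"
    unfolding frame_potential_def by (intro sum.cong refl) (simp add: sum.remove)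
  also have "\<dots> = (\<Sum>j<n. 1 + (\<Sum>k\<in>{..<n} - {j}. ip (\<tau> j) (\<tau> k) * ip (\<tau> k) (\<tau> j)))"
    using unit by (intro sum.cong refl) simp
  finally show ?thesis by (simp add: sum.distrib cross_sum_def)
qed

lemma frame_potential_lower_bound:
  assumes rank: "has_rank act ip d" and d: "d > 0" and unit: "\<forall>j<n. ip (\<tau> j) (\<tau> j) = 1"
  shows "npos (frame_potential n \<tau> - of_real (real n ^ 2 / real d))"
proof -
  obtain \<omega> where basis: "\<forall>x. x = (\<Sum>i<d. act (ip x (\<omega> i)) (\<omega> i))"
    using rank unfolding has_rank_def by blast
  define M where "M i l = (\<Sum>k<n. ip (\<omega> i) (\<tau> k) * ip (\<tau> k) (\<omega> l))" for i l
  have "frame_potential n \<tau> = (\<Sum>j<n. \<Sum>k<n. \<Sum>i<d. \<Sum>l<d.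
      ip (\<tau> j) (\<omega> i) * ip (\<omega> i) (\<tau> k) * (ip (\<tau> k) (\<omega> l) * ip (\<omega> l) (\<tau> j)))"
    unfolding frame_potential_def ip_expand_basis[OF basis, of "\<tau> _" "\<tau> _"] by (simp add: sum_product)
  also have "\<dots> = (\<Sum>i<d. \<Sum>l<d. M l i * M i l)"
    unfolding sum_swap_pairs[of _ "{..<n}" "{..<n}" "{..<d}" "{..<d}"] M_def sum_product
    by (intro sum.cong refl) (simp add: mult_ac)
  also have "\<dots> = (\<Sum>i<d. M i i * M i i) + (\<Sum>i<d. \<Sum>l\<in>{..<d} - {i}. M l i * M i l)"
    by (simp add: sum.remove sum.distrib)
  finally have fp: "frame_potential n \<tau> - of_real (real n ^ 2 / real d)
      = ((\<Sum>i<d. M i i * M i i) - of_real (real n ^ 2 / real d)) + (\<Sum>i<d. \<Sum>l\<in>{..<d} - {i}. M l i * M i l)"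
    by simp
  have M_swap: "M l i = st (M i l)" for i l
    by (simp add: M_def st_sum st_mult mult.commute flip: ip_swap)
  have "(\<Sum>i<d. M i i) = (\<Sum>k<n. \<Sum>i<d. ip (\<tau> k) (\<omega> i) * ip (\<omega> i) (\<tau> k))"
    unfolding M_def by (subst sum.swap) (simp add: mult.commute)
  also have "\<dots> = (\<Sum>k<n. 1)"
    using unit by (intro sum.cong refl) (simp flip: ip_expand_basis[OF basis])
  finally have trace: "(\<Sum>i<d. M i i) = of_real (real n)" by simp
  have "npos ((\<Sum>i<d. M i i * M i i) - of_real (real n ^ 2 / real d))"
    by (rule npos_sum_squares_diff[OF d _ trace]) (simp flip: M_swap)
  moreover have "npos (M l i * M i l)" for i l
    using npos_st_mult[of "M i l"] by (simp flip: M_swap)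
  hence "npos (\<Sum>i<d. \<Sum>l\<in>{..<d} - {i}. M l i * M i l)" by (intro npos_sum)
  ultimately show ?thesis unfolding fp by (rule npos_add)
qed

lemma npos_cross_mean_diff:
  assumes rank: "has_rank act ip d" and n: "n \<ge> max d 2" and unit: "\<forall>j<n. ip (\<tau> j) (\<tau> j) = 1"
  shows "npos (cross_mean n \<tau> - of_real ((real n - real d) / (real d * (real n - 1))))"
proof (cases "d = 0")
  case True
  thus ?thesis using npos_cross_mean by simp
next
  case False
  define c where "c = 1 / (real n * (real n - 1))"
  define X where "X = real n ^ 2 / real d"
  have c0: "c * (X - real n) = (real n - real d) / (real d * (real n - 1))"
    using n False by (simp add: c_def X_def field_simps power2_eq_square)
  have "cross_mean n \<tau> = of_real c * cross_sum n \<tau>"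
    by (simp add: cross_mean_def c_def)
  hence "cross_mean n \<tau> - of_real ((real n - real d) / (real d * (real n - 1)))
      = of_real c * (frame_potential n \<tau> - of_real X)"
    unfolding c0[symmetric] by (simp add: frame_potential_eq[OF unit] algebra_simps)
  also have "npos \<dots>"
    using npos_of_real_mult[OF frame_potential_lower_bound[OF rank _ unit, folded X_def]] n False
    by (simp add: c_def)
  finally show ?thesis .
qed

end

theorem proposition3p2:
  fixes emb :: "complex \<Rightarrow> 'a::{real_normed_algebra_1,comm_ring_1,banach}"
    and st :: "'a \<Rightarrow> 'a"
    and act :: "'a \<Rightarrow> 'm::ab_group_add \<Rightarrow> 'm"
    and ip :: "'m \<Rightarrow> 'm \<Rightarrow> 'a"
    and d n :: nat
    and \<tau> :: "nat \<Rightarrow> 'm"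
  assumes "cstar_algebra emb st"
    and "sigma_finite_Wstar emb st \<or> AWstar emb st"
    and "hilbert_module emb st act ip"
    and "has_rank act ip d"
    and "n \<ge> max d 2"
    and "\<forall>j<n. ip (\<tau> j) (\<tau> j) = 1"
  shows "1 \<ge> norm (I_MRMS emb st ip n \<tau>)
    \<and> cle emb st (I_MRMS emb st ip n \<tau>) (emb (complex_of_real (norm (I_MRMS emb st ip n \<tau>))))
    \<and> cle emb st (emb (complex_of_real (sqrt ((real n - real d) / (real d * (real n - 1))))))
                 (I_MRMS emb st ip n \<tau>)"
proof -
  interpret comm_hilbert_module emb st act ip
    using assms(1,3) by unfold_locales
  obtain y where y: "npos y" "y * y = cross_mean n \<tau>"
    using npos_sqrt[OF npos_cross_mean] by blast
  have I: "I_MRMS emb st ip n \<tau> = y"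
    using psqrt_square[OF y(1)] y(2) by (simp add: I_MRMS_eq_psqrt_cross_mean)
  have "norm y \<le> 1"
    using norm_le_one_if_npos_one_minus_square[OF y(1)] npos_one_minus_cross_mean[OF _ assms(6)]
      assms(5) y(2) by simp
  moreover have "cle emb st y (emb (complex_of_real (norm y)))"
    unfolding cle_def emb_of_real positive_el_iff_npos
    by (rule npos_of_real_diff[OF npos_selfadjoint[OF y(1)]]) simp
  moreover have "cle emb st (emb (complex_of_real (sqrt ((real n - real d) / (real d * (real n - 1)))))) y"
    unfolding cle_def emb_of_real positive_el_iff_npos
    using npos_diff_of_real_sqrt[OF y(1) _ npos_cross_mean_diff[OF assms(4,5,6), folded y(2)]] assms(5)
    by simp
  ultimately show ?thesis by (simp add: I)
qed

end
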